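(* Let $n\geq 0$ and $r\geq 0$ be integers and let $k\in\mathbf{Z}$. Then \begin{align*} \tilde{A}_{n}^{(r,k)}(x)=\sum_{j=0}^{n}\Bigg\{\sum_{l=0}^{n-j}\sum_{a=0}^{n-j-l}\binom{n}{l+j}\binom{n-j-l}{a}S_{1}(l+j,j)\,B_{a}^{(a-r+1)}(1-r)\,\tilde{C}_{n-j-l-a}^{(k)}\Bigg\}x^{j}. \end{align*}
   Context: For $k\in\mathbf{Z}$, $Lif_{k}(x)=\sum_{m=0}^{\infty}\frac{x^{m}}{m!(m+1)^{k}}$. For integers $r\geq 0$, $k\in\mathbf{Z}$, the polynomials $\tilde{A}_{n}^{(r,k)}(x)$ are defined by \[\left(\frac{t}{(1+t)\log(1+t)}\right)^{r}Lif_{k}\left(-\log(1+t)\right)(1+t)^{x}=\sum_{n=0}^{\infty}\tilde{A}_{n}^{(r,k)}(x)\frac{t^{n}}{n!}.\] The poly-Cauchy numbers of the second kind $\tilde{C}_{n}^{(k)}$ are defined by $Lif_{k}\left(-\log(1+t)\right)=\sum_{n=0}^{\infty}\tilde{C}_{n}^{(k)}\frac{t^{n}}{n!}$. For an integer $\alpha$ (possibly negative), the Bernoulli polynomials of order $\alpha$ are defined by $\left(\frac{t}{e^{t}-1}\right)^{\alpha}e^{xt}=\sum_{n=0}^{\infty}B_{n}^{(\alpha)}(x)\frac{t^{n}}{n!}$. $S_{1}(n,m)$ denotes the signed Stirling numbers of the first kind, defined by $x(x-1)\cdots(x-n+1)=\sum_{m=0}^{n}S_{1}(n,m)x^{m}$.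 *)

theory Defs
  imports "HOL-Computational_Algebra.Formal_Power_Series" "HOL-Computational_Algebra.Polynomial"
begin

definition log1p_fps :: "real fps" where
  "log1p_fps = Abs_fps (\<lambda>n. if n = 0 then 0 else (-1) ^ (n + 1) / of_nat n)"

definition Lif_fps :: "int \<Rightarrow> real fps" where
  "Lif_fps k = Abs_fps (\<lambda>m. 1 / (fact m * (of_nat m + 1) powi k))"

definition Lif_neglog :: "int \<Rightarrow> real fps" where
  "Lif_neglog k = Lif_fps k oo (- log1p_fps)"

definition polyCauchy2 :: "nat \<Rightarrow> int \<Rightarrow> real" where
  "polyCauchy2 n k = fact n * fps_nth (Lif_neglog k) n"

(* t / ((1+t) log(1+t)) ; note log(1+t)/t = fps_shift 1 log1p_fps has constant term 1 *)
definition A_factor :: "real fps" where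
  "A_factor = inverse ((1 + fps_X) * fps_shift 1 log1p_fps)"

definition A_tilde :: "nat \<Rightarrow> nat \<Rightarrow> int \<Rightarrow> real \<Rightarrow> real" where
  "A_tilde n r k x = fact n * fps_nth (A_factor ^ r * Lif_neglog k * fps_binomial x) n"

definition expm1_div_fps :: "real fps" where
  "expm1_div_fps = Abs_fps (\<lambda>n. 1 / fact (n + 1))"

(* (t/(e^t-1))^alpha for integer alpha *)
definition bern_gen_pow :: "int \<Rightarrow> real fps" where
  "bern_gen_pow \<alpha> = (if \<alpha> \<ge> 0 then inverse expm1_div_fps ^ nat \<alpha>
                      else expm1_div_fps ^ nat (- \<alpha>))"

definition bernoulli_order :: "nat \<Rightarrow> int \<Rightarrow> real \<Rightarrow> real" where
  "bernoulli_order n \<alpha> x = fact n * fps_nth (bern_gen_pow \<alpha> * fps_exp x) n"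

definition stirling1_signed :: "nat \<Rightarrow> nat \<Rightarrow> int" where
  "stirling1_signed n m = coeff (\<Prod>i<n. [:- of_nat i, 1:]) m"

end

theory Submission
  imports Defs
begin

text \<open>
  Write \<open>log(1+t) = t \<psi>(t)\<close>. Then \<open>(t/((1+t) log(1+t)))^r = \<psi>^-r (1+t)^-r\<close>, and its
  coefficient of \<open>t^a\<close> is extracted by the residue identity
  \<open>[t^a] (P \<circ> log(1+t)) \<psi>^-(a+1) (log(1+t))' = [t^a] P\<close>, applied to
  \<open>P = (t/(e^t-1))^(a-r+1) e^((1-r)t)\<close>, for which \<open>P \<circ> log(1+t) = \<psi>^(a+1-r) (1+t)^(1-r)\<close>.
  This gives \<open>[t^a] (t/((1+t) log(1+t)))^r = B_a^(a-r+1)(1-r) / a!\<close>. The formula then follows by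
  multiplying the exponential generating functions \<open>(1+t)^x\<close>, \<open>(t/((1+t) log(1+t)))^r\<close> and
  \<open>Lif_k(-log(1+t))\<close>, and expanding \<open>m! (x choose m) = \<Sum>j S1(m,j) x^j\<close>.
\<close>

unbundle fps_syntax

lemma fps_nth_inverse_power_Suc_mult_deriv:
  fixes \<psi> :: "'a::field_char_0 fps"
  assumes "\<psi> $ 0 \<noteq> 0"
  shows "(inverse \<psi> ^ Suc m * fps_deriv (fps_X * \<psi>)) $ m = (if m = 0 then 1 else 0)"
proof (cases "m = 0")
  case True
  then show ?thesis using assms by simp
next
  case False
  define f where "f = inverse \<psi> ^ m"
  have "inverse \<psi> ^ Suc m * \<psi> = f"
    using assms by (simp add: f_def inverse_mult_eq_1 mult.assoc)
  moreover have "fps_deriv f = - (fps_const (of_nat m) * fps_deriv \<psi> * inverse \<psi> ^ Suc m)"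
  proof -
    have "inverse \<psi> ^ 2 * inverse \<psi> ^ (m - 1) = inverse \<psi> ^ Suc m"
      using False by (simp flip: power_add)
    then show ?thesis
      using assms by (simp add: f_def fps_deriv_power fps_inverse_deriv algebra_simps)
  qed
  \<comment> \<open>the coefficient of \<open>t^m\<close> in \<open>m f - t f'\<close> vanishes\<close>
  ultimately have eq: "fps_const (of_nat m) * (inverse \<psi> ^ Suc m * fps_deriv (fps_X * \<psi>))
      = fps_const (of_nat m) * f - fps_X * fps_deriv f"
    by (simp add: algebra_simps)
  have "(fps_const (of_nat m) * f - fps_X * fps_deriv f) $ m = 0"
    using False by (cases m) simp_all
  then show ?thesis
    using False by (simp flip: eq)
qed

lemma fps_nth_compose_mult_inverse_power_deriv:
  fixes P \<psi> :: "'a::field_char_0 fps"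
  assumes "\<psi> $ 0 \<noteq> 0"
  shows "((P oo (fps_X * \<psi>)) * (inverse \<psi> ^ Suc a * fps_deriv (fps_X * \<psi>))) $ a = P $ a"
proof -
  define W where "W = inverse \<psi> ^ Suc a * fps_deriv (fps_X * \<psi>)"
  have pow_nth: "((fps_X * \<psi>) ^ i) $ j = (if j < i then 0 else (\<psi> ^ i) $ (j - i))" for i j
    by (simp add: power_mult_distrib fps_X_power_mult_nth)
  have pow_W: "((fps_X * \<psi>) ^ i * W) $ a = (if i = a then 1 else 0)" if "i \<le> a" for i
  proof -
    have cancel: "\<psi> ^ i * inverse \<psi> ^ Suc a = inverse \<psi> ^ Suc (a - i)"
    proof -
      have "\<psi> ^ i * inverse \<psi> ^ i = 1"
        using assms by (simp add: inverse_mult_eq_1' flip: power_mult_distrib)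
      moreover have "inverse \<psi> ^ Suc a = inverse \<psi> ^ i * inverse \<psi> ^ Suc (a - i)"
        using that by (simp flip: power_add)
      ultimately show ?thesis
        by (metis mult.assoc mult_1)
    qed
    have "(fps_X * \<psi>) ^ i * W
        = fps_X ^ i * ((\<psi> ^ i * inverse \<psi> ^ Suc a) * fps_deriv (fps_X * \<psi>))"
      by (simp only: W_def power_mult_distrib mult.assoc)
    also have "\<dots> = fps_X ^ i * (inverse \<psi> ^ Suc (a - i) * fps_deriv (fps_X * \<psi>))"
      by (simp only: cancel)
    finally have "(fps_X * \<psi>) ^ i * W = \<dots>" .
    then show ?thesis
      using that fps_nth_inverse_power_Suc_mult_deriv[OF assms, of "a - i"]
      by (simp add: fps_X_power_mult_nth)
  qed
  have compose_nth: "(P oo (fps_X * \<psi>)) $ j = (\<Sum>i=0..a. P $ i * ((fps_X * \<psi>) ^ i) $ j)"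
    if "j \<le> a" for j
    unfolding fps_compose_nth using that
    by (intro sum.mono_neutral_left) (auto simp: pow_nth)
  have "((P oo (fps_X * \<psi>)) * W) $ a
      = (\<Sum>j=0..a. \<Sum>i=0..a. P $ i * ((fps_X * \<psi>) ^ i) $ j * W $ (a - j))"
    by (simp add: fps_mult_nth compose_nth sum_distrib_right)
  also have "\<dots> = (\<Sum>i=0..a. P $ i * ((fps_X * \<psi>) ^ i * W) $ a)"
    by (subst sum.swap) (simp add: fps_mult_nth sum_distrib_left mult.assoc)
  also have "\<dots> = P $ a"
    by (simp add: pow_W if_distrib cong: if_cong)
  finally show ?thesis
    by (simp add: W_def)
qed

definition log1p_over_X :: "real fps" where
  "log1p_over_X = fps_shift 1 log1p_fps"

lemma log1p_fps_nth_0 [simp]: "log1p_fps $ 0 = 0"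
  by (simp add: log1p_fps_def)

lemma log1p_over_X_nth_0 [simp]: "log1p_over_X $ 0 = 1"
  by (simp add: log1p_over_X_def log1p_fps_def)

lemma fps_X_mult_log1p_over_X: "fps_X * log1p_over_X = log1p_fps"
  by (intro fps_ext) (auto simp: log1p_fps_def log1p_over_X_def)

lemma log1p_fps_eq_fps_ln: "log1p_fps = fps_ln 1"
  by (intro fps_ext) (auto simp: log1p_fps_def fps_ln_def gr0_conv_Suc)

lemma fps_deriv_log1p_fps: "fps_deriv log1p_fps = inverse (1 + fps_X)"
  by (simp add: log1p_fps_eq_fps_ln fps_ln_deriv)

lemma fps_exp_compose_log1p: "fps_exp c oo log1p_fps = fps_binomial c"
proof -
  let ?g = "fps_exp c oo log1p_fps"
  have "fps_deriv ?g = (fps_const c * fps_exp c oo log1p_fps) * inverse (1 + fps_X)"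
    by (simp add: fps_compose_deriv fps_deriv_log1p_fps)
  then have "fps_deriv ?g = fps_const c * ?g / (1 + fps_X)"
    by (simp add: fps_compose_mult_distrib fps_divide_unit)
  moreover have "?g $ 0 = 1"
    by simp
  ultimately show ?thesis
    using fps_binomial_ODE_unique' by blast
qed

lemma expm1_div_fps_compose_log1p: "expm1_div_fps oo log1p_fps = inverse log1p_over_X"
proof -
  have "fps_X * expm1_div_fps = fps_exp 1 - 1"
    by (intro fps_ext) (auto simp: expm1_div_fps_def gr0_conv_Suc)
  then have "(fps_X * expm1_div_fps) oo log1p_fps = fps_X"
    by (simp add: fps_compose_sub_distrib fps_exp_compose_log1p fps_binomial_1)
  then have "fps_X * (log1p_over_X * (expm1_div_fps oo log1p_fps)) = fps_X * 1"
    by (simp add: fps_compose_mult_distrib mult.assoc flip: fps_X_mult_log1p_over_X)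
  then have "log1p_over_X * (expm1_div_fps oo log1p_fps) = 1"
    by (metis fps_X_neq_zero mult_cancel_left)
  then show ?thesis
    by (simp add: fps_inverse_unique mult.commute)
qed

lemma bern_gen_pow_compose_log1p:
  "bern_gen_pow \<alpha> oo log1p_fps
     = (if 0 \<le> \<alpha> then log1p_over_X ^ nat \<alpha> else inverse log1p_over_X ^ nat (- \<alpha>))"
proof -
  have "expm1_div_fps $ 0 \<noteq> 0"
    by (simp add: expm1_div_fps_def)
  then have "inverse expm1_div_fps oo log1p_fps = log1p_over_X"
    by (simp add: fps_inverse_compose expm1_div_fps_compose_log1p)
  then show ?thesis
    by (simp add: bern_gen_pow_def expm1_div_fps_compose_log1p flip: fps_compose_power)
qed

lemma A_factor_eq_inverse_mult_deriv: "A_factor = inverse log1p_over_X * fps_deriv log1p_fps"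
  unfolding A_factor_def log1p_over_X_def[symmetric]
  by (simp add: fps_inverse_mult fps_deriv_log1p_fps mult.commute)

lemma bern_gen_pow_compose_log1p_mult:
  "(bern_gen_pow (int a - int r + 1) oo log1p_fps) * inverse log1p_over_X ^ Suc a
     = inverse log1p_over_X ^ r"
proof (cases "r \<le> Suc a")
  case True
  have "log1p_over_X ^ (Suc a - r) * inverse log1p_over_X ^ (Suc a - r) = 1"
    by (simp add: inverse_mult_eq_1' flip: power_mult_distrib)
  moreover have "inverse log1p_over_X ^ Suc a
      = inverse log1p_over_X ^ (Suc a - r) * inverse log1p_over_X ^ r"
    using True by (simp flip: power_add)
  moreover have "nat (int a - int r + 1) = Suc a - r"
    using True by simp
  ultimately show ?thesis
    using True by (simp add: bern_gen_pow_compose_log1p mult.assoc[symmetric])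
next
  case False
  then have "bern_gen_pow (int a - int r + 1) oo log1p_fps
      = inverse log1p_over_X ^ nat (- (int a - int r + 1))"
    by (simp add: bern_gen_pow_compose_log1p)
  moreover have "nat (- (int a - int r + 1)) + Suc a = r"
    using False by simp
  ultimately show ?thesis
    by (simp only: flip: power_add)
qed

lemma fps_binomial_mult_deriv_log1p:
  "fps_binomial (1 - real r) * fps_deriv log1p_fps = fps_deriv log1p_fps ^ r"
proof -
  have "fps_binomial (1 - real r) * fps_binomial (- 1) = fps_binomial (of_nat r * (- 1))"
    by (simp flip: fps_binomial_add_mult)
  then show ?thesis
    by (simp add: fps_deriv_log1p_fps fps_binomial_power flip: fps_binomial_minus_one)
qed

lemma A_factor_power_nth:
  "(A_factor ^ r) $ a = (bern_gen_pow (int a - int r + 1) * fps_exp (1 - real r)) $ a"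
proof -
  define P where "P = bern_gen_pow (int a - int r + 1) * fps_exp (1 - real r)"
  have "(P oo log1p_fps) * (inverse log1p_over_X ^ Suc a * fps_deriv log1p_fps)
      = ((bern_gen_pow (int a - int r + 1) oo log1p_fps) * inverse log1p_over_X ^ Suc a)
        * (fps_binomial (1 - real r) * fps_deriv log1p_fps)"
    by (simp add: P_def fps_compose_mult_distrib fps_exp_compose_log1p ac_simps)
  also have "\<dots> = A_factor ^ r"
    by (simp only: bern_gen_pow_compose_log1p_mult fps_binomial_mult_deriv_log1p
        A_factor_eq_inverse_mult_deriv power_mult_distrib)
  finally have "A_factor ^ r
      = (P oo (fps_X * log1p_over_X)) * (inverse log1p_over_X ^ Suc a
          * fps_deriv (fps_X * log1p_over_X))"
    by (simp add: fps_X_mult_log1p_over_X)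
  then show ?thesis
    using fps_nth_compose_mult_inverse_power_deriv[of log1p_over_X P a] by (simp add: P_def)
qed

lemma sum_of_int_coeff_mult_monic_linear:
  fixes p :: "int poly" and x :: "'a::comm_ring_1"
  assumes "degree p \<le> N"
  shows "(\<Sum>j\<le>Suc N. of_int (coeff (p * [:c, 1:]) j) * x ^ j)
       = (\<Sum>j\<le>N. of_int (coeff p j) * x ^ j) * (x + of_int c)"
proof -
  have low: "(\<Sum>j\<le>Suc N. of_int (coeff p j) * x ^ j) = (\<Sum>j\<le>N. of_int (coeff p j) * x ^ j)"
    using assms by (simp add: coeff_eq_0)
  have shift: "(\<Sum>j\<le>Suc N. of_int (coeff (pCons 0 p) j) * x ^ j)
      = x * (\<Sum>j\<le>N. of_int (coeff p j) * x ^ j)"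
    by (simp add: sum.atMost_Suc_shift sum_distrib_left mult_ac del: sum.atMost_Suc)
  have "p * [:c, 1:] = smult c p + pCons 0 p"
    by simp
  then have "(\<Sum>j\<le>Suc N. of_int (coeff (p * [:c, 1:]) j) * x ^ j)
      = of_int c * (\<Sum>j\<le>Suc N. of_int (coeff p j) * x ^ j)
        + (\<Sum>j\<le>Suc N. of_int (coeff (pCons 0 p) j) * x ^ j)"
    by (simp only: coeff_add coeff_smult of_int_add of_int_mult sum.distrib sum_distrib_left
        distrib_right mult.assoc)
  then show ?thesis
    by (simp only: low shift) (simp add: algebra_simps)
qed

lemma sum_stirling1_signed_power:
  fixes x :: "'a::field_char_0"
  shows "(\<Sum>j=0..m. of_int (stirling1_signed m j) * x ^ j) = fact m * (x gchoose m)"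
proof -
  have "(\<Sum>j\<le>m. of_int (coeff (\<Prod>i<m. [:- int i, 1:]) j) * x ^ j) = (\<Prod>i<m. x - of_nat i)"
  proof (induction m)
    case (Suc m)
    have "degree (\<Prod>i<m. [:- int i, 1:]) \<le> m"
      by (rule order_trans[OF degree_prod_sum_le]) simp_all
    then have "(\<Sum>j\<le>Suc m. of_int (coeff (\<Prod>i<Suc m. [:- int i, 1:]) j) * x ^ j)
        = (\<Sum>j\<le>m. of_int (coeff (\<Prod>i<m. [:- int i, 1:]) j) * x ^ j) * (x + of_int (- int m))"
      unfolding prod.lessThan_Suc by (rule sum_of_int_coeff_mult_monic_linear)
    with Suc.IH show ?case
      by simp
  qed simp
  then show ?thesis
    by (simp add: stirling1_signed_def gbinomial_mult_fact atLeast0AtMost atLeast0LessThan)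
qed

lemma fact_mult_fps_mult_nth:
  fixes f g :: "'a::field_char_0 fps"
  shows "fact n * (f * g) $ n
       = (\<Sum>m=0..n. of_nat (n choose m) * (fact m * f $ m) * (fact (n - m) * g $ (n - m)))"
  unfolding fps_mult_nth sum_distrib_left
  by (intro sum.cong refl) (simp add: binomial_fact field_simps)

lemma sum_triangle_shift:
  fixes g :: "nat \<Rightarrow> nat \<Rightarrow> 'a::comm_monoid_add"
  shows "(\<Sum>m=0..n. \<Sum>j=0..m. g j m) = (\<Sum>j=0..n. \<Sum>l=0..n-j. g j (l + j))"
proof -
  have "(\<Sum>m=0..n. \<Sum>j=0..m. g j m) = (\<Sum>m\<in>{0..n}. \<Sum>j\<in>{j. j \<in> {0..n} \<and> j \<le> m}. g j m)"
    by (intro sum.cong) auto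
  also have "\<dots> = (\<Sum>j\<in>{0..n}. \<Sum>m\<in>{m. m \<in> {0..n} \<and> j \<le> m}. g j m)"
    by (rule sum.swap_restrict) simp_all
  also have "\<dots> = (\<Sum>j=0..n. \<Sum>m=0+j..n-j+j. g j m)"
    by (intro sum.cong) auto
  also have "\<dots> = (\<Sum>j=0..n. \<Sum>l=0..n-j. g j (l + j))"
    by (simp only: sum.shift_bounds_cl_nat_ivl)
  finally show ?thesis .
qed

theorem theorem3:
  fixes n r :: nat and k :: int and x :: real
  shows "A_tilde n r k x =
    (\<Sum>j=0..n. (\<Sum>l=0..n-j. \<Sum>a=0..n-j-l.
        real (n choose (l + j)) * real ((n - j - l) choose a)
        * of_int (stirling1_signed (l + j) j)
        * bernoulli_order a (int a - int r + 1) (1 - real r)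
        * polyCauchy2 (n - j - l - a) k) * x ^ j)"
proof -
  have bernoulli: "bernoulli_order a (int a - int r + 1) (1 - real r) = fact a * (A_factor ^ r) $ a"
    for a
    by (simp add: bernoulli_order_def A_factor_power_nth)
  have "A_tilde n r k x = fact n * (fps_binomial x * (A_factor ^ r * Lif_neglog k)) $ n"
    by (simp add: A_tilde_def mult.commute)
  also have "\<dots> = (\<Sum>m=0..n. real (n choose m) * (fact m * (x gchoose m))
      * (\<Sum>a=0..n-m. real ((n - m) choose a) * bernoulli_order a (int a - int r + 1) (1 - real r)
          * polyCauchy2 (n - m - a) k))"
    by (simp add: fact_mult_fps_mult_nth bernoulli polyCauchy2_def mult.assoc)
  also have "\<dots> = (\<Sum>m=0..n. \<Sum>j=0..m. (\<Sum>a=0..n-m.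
        real (n choose m) * real ((n - m) choose a) * of_int (stirling1_signed m j)
        * bernoulli_order a (int a - int r + 1) (1 - real r)
        * polyCauchy2 (n - m - a) k) * x ^ j)"
    by (intro sum.cong refl)
      (simp add: sum_stirling1_signed_power[symmetric] sum_distrib_left sum_distrib_right mult_ac,
        rule sum.swap)
  finally show ?thesis
    by (simp add: sum_triangle_shift sum_distrib_right add.commute)
qed

end
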